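(* Let $n \ge 3$ and let $\vec{x} = [x_t]_{t=0}^{n-1}$ and $\vec{q} = [q_t]_{t=0}^{n-1}$ be real-valued sequences, with discrete Fourier transforms $\vec{X}$ and $\vec{Q}$ defined by $$X_f = \frac{1}{\sqrt{n}} \sum_{t=0}^{n-1} x_t e^{-j 2\pi t f / n}, \qquad Q_f = \frac{1}{\sqrt{n}} \sum_{t=0}^{n-1} q_t e^{-j 2\pi t f / n}, \qquad f = 0, 1, \ldots, n-1,$$ where $j = \sqrt{-1}$. Let $D(\vec{x},\vec{q}) = \left(\sum_{t=0}^{n-1} |x_t - q_t|^2\right)^{1/2}$ be the Euclidean distance, and let $\epsilon > 0$. Let $k$ be an integer with $1 \le k < n/2$. If $D(\vec{x},\vec{q}) < \epsilon$, then $|X_0 - Q_0| < \epsilon$ and $$|X_f - Q_f| < \frac{\epsilon}{\sqrt{2}} \qquad \text{for all } f = 1, \ldots, k.$$ In particular, the axis-parallel box in the feature space of the first $k+1$ DFT coefficients that is centered at $(Q_0, Q_1, \ldots, Q_k)$ and has side $2\epsilon$ in the coordinate of $X_0$ and side $\sqrt{2}\,\epsilon$ in each real coordinate of $X_1, \ldots, X_k$ contains $(X_0, X_1, \ldots, X_k)$ for every $\vec{x}$ with $D(\vec{x},\vec{q}) < \epsilon$.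
   Context: The time sequences are real-valued. The real coordinates of a complex coefficient $X_f$ are its real and imaginary parts. For a real-valued sequence, $X_0$ is a real number. *)

theory Defs
  imports Complex_Main
begin

definition dft :: "nat \<Rightarrow> (nat \<Rightarrow> real) \<Rightarrow> nat \<Rightarrow> complex" where
  "dft n x f = complex_of_real (1 / sqrt (real n)) *
     (\<Sum>t<n. complex_of_real (x t) *
        exp (- \<i> * complex_of_real (2 * pi * real t * real f / real n)))"

definition eucl_dist :: "nat \<Rightarrow> (nat \<Rightarrow> real) \<Rightarrow> (nat \<Rightarrow> real) \<Rightarrow> real" where
  "eucl_dist n x q = sqrt (\<Sum>t<n. \<bar>x t - q t\<bar> ^ 2)"

end

theory Submission
  imports Defs "HOL-Analysis.Analysis"
begin

text \<open>Write \<open>d = x - q\<close>; by linearity \<open>X\<^sub>f - Q\<^sub>f\<close> is the DFT of \<open>d\<close>, and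
  \<open>n |X\<^sub>f - Q\<^sub>f|\<^sup>2 = A\<^sup>2 + B\<^sup>2\<close>, where \<open>A\<close>, \<open>B\<close> are the inner products of \<open>d\<close> with the
  cosine and sine vectors \<open>c\<close>, \<open>s\<close> of frequency \<open>f\<close>. If \<open>|\<alpha> c + \<beta> s|\<^sup>2 \<le> N (\<alpha>\<^sup>2 + \<beta>\<^sup>2)\<close>
  for all \<open>\<alpha>, \<beta>\<close>, then Cauchy-Schwarz applied to \<open>A\<^sup>2 + B\<^sup>2 = \<langle>d, A c + B s\<rangle>\<close> gives
  \<open>A\<^sup>2 + B\<^sup>2 \<le> N |d|\<^sup>2\<close>. Since \<open>(\<alpha> cos \<phi> + \<beta> sin \<phi>)\<^sup>2 \<le> \<alpha>\<^sup>2 + \<beta>\<^sup>2\<close>,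
  \<open>N = n\<close> always works. If \<open>n\<close> does not divide \<open>2f\<close>,
  as for \<open>1 \<le> f < n/2\<close>, then \<open>c\<close> and \<open>s\<close> are orthogonal of squared norm \<open>n/2\<close>, because
  the \<open>n\<close>-th roots of unity \<open>exp(4\<pi>itf/n)\<close> sum to zero; so \<open>N = n/2\<close>, which is the
  factor \<open>1/\<surd>2\<close>.\<close>

lemma sum_cis_roots_of_unity_eq_0:
  assumes "\<not> n dvd m"
  shows "(\<Sum>t<n. cis (2 * pi * real t * real m / real n)) = 0"
proof (cases "n = 0")
  case False
  define \<omega> where "\<omega> = cis (2 * pi * real m / real n)"
  have "\<omega> \<noteq> 1"
    using complex_root_unity_eq_1[of n m] False assms
    by (simp add: \<omega>_def cis_conv_exp mult_ac)
  moreover have "\<omega> ^ n = 1"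
    \<comment> \<open>qualified: HOL-Analysis shadows \<open>DeMoivre\<close> by a version for \<open>cos z + \<i> sin z\<close>\<close>
    unfolding \<omega>_def Complex.DeMoivre using False by simp
  moreover have "(\<Sum>t<n. cis (2 * pi * real t * real m / real n)) = (\<Sum>t<n. \<omega> ^ t)"
    by (simp add: \<omega>_def Complex.DeMoivre mult_ac)
  ultimately show ?thesis
    by (simp add: geometric_sum)
qed simp

lemma sq_cos_sin_comb_le:
  fixes \<alpha> \<beta> x :: real
  shows "(\<alpha> * cos x + \<beta> * sin x)\<^sup>2 \<le> \<alpha>\<^sup>2 + \<beta>\<^sup>2"
proof -
  have "(\<alpha> * cos x + \<beta> * sin x)\<^sup>2 + (\<alpha> * sin x - \<beta> * cos x)\<^sup>2
        = (\<alpha>\<^sup>2 + \<beta>\<^sup>2) * ((sin x)\<^sup>2 + (cos x)\<^sup>2)"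
    by algebra
  then show ?thesis
    by (metis le_add_same_cancel1 mult.right_neutral sin_cos_squared_add zero_le_power2)
qed

lemma sum_sq_cos_sin_comb_dft_angles:
  fixes \<alpha> \<beta> :: real
  assumes "\<not> n dvd 2 * f"
  shows "(\<Sum>t<n. (\<alpha> * cos (2 * pi * real t * real f / real n)
                  + \<beta> * sin (2 * pi * real t * real f / real n))\<^sup>2)
         = real n / 2 * (\<alpha>\<^sup>2 + \<beta>\<^sup>2)"
proof -
  define \<theta> where "\<theta> t = 2 * pi * real t * real f / real n" for t
  have double: "2 * \<theta> t = 2 * pi * real t * real (2 * f) / real n" for t
    by (simp add: \<theta>_def)
  have roots: "(\<Sum>t<n. cis (2 * \<theta> t)) = 0"
    unfolding double by (rule sum_cis_roots_of_unity_eq_0[OF assms])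
  have cos_sum: "(\<Sum>t<n. cos (2 * \<theta> t)) = 0"
    using arg_cong[OF roots, of Re] by simp
  have sin_sum: "(\<Sum>t<n. sin (2 * \<theta> t)) = 0"
    using arg_cong[OF roots, of Im] by simp
  have "(\<alpha> * cos (\<theta> t) + \<beta> * sin (\<theta> t))\<^sup>2
        = (\<alpha>\<^sup>2 + \<beta>\<^sup>2) / 2 + (\<alpha>\<^sup>2 - \<beta>\<^sup>2) / 2 * cos (2 * \<theta> t) + \<alpha> * \<beta> * sin (2 * \<theta> t)" for t
    using sin_cos_squared_add[of "\<theta> t"] unfolding cos_double sin_double by algebra
  then have "(\<Sum>t<n. (\<alpha> * cos (\<theta> t) + \<beta> * sin (\<theta> t))\<^sup>2)
        = real n / 2 * (\<alpha>\<^sup>2 + \<beta>\<^sup>2) + (\<alpha>\<^sup>2 - \<beta>\<^sup>2) / 2 * (\<Sum>t<n. cos (2 * \<theta> t))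
          + \<alpha> * \<beta> * (\<Sum>t<n. sin (2 * \<theta> t))"
    by (simp add: sum.distrib sum_distrib_left)
  also have "\<dots> = real n / 2 * (\<alpha>\<^sup>2 + \<beta>\<^sup>2)"
    by (simp add: cos_sum sin_sum)
  finally show ?thesis
    by (simp only: \<theta>_def)
qed

lemma analysis_bound_of_synthesis_bound:
  fixes c s d :: "'a \<Rightarrow> real"
  assumes synthesis: "\<And>\<alpha> \<beta>. (\<Sum>t\<in>T. (\<alpha> * c t + \<beta> * s t)\<^sup>2) \<le> N * (\<alpha>\<^sup>2 + \<beta>\<^sup>2)"
  shows "(\<Sum>t\<in>T. d t * c t)\<^sup>2 + (\<Sum>t\<in>T. d t * s t)\<^sup>2 \<le> N * (\<Sum>t\<in>T. (d t)\<^sup>2)"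
proof -
  define A where "A = (\<Sum>t\<in>T. d t * c t)"
  define B where "B = (\<Sum>t\<in>T. d t * s t)"
  have "N \<ge> 0"
    using synthesis[of 1 0] sum_nonneg[of T "\<lambda>t. (c t)\<^sup>2"] by simp
  have "(A\<^sup>2 + B\<^sup>2)\<^sup>2 = (\<Sum>t\<in>T. d t * (A * c t + B * s t))\<^sup>2"
    by (simp add: A_def B_def power2_eq_square algebra_simps sum.distrib sum_distrib_left)
  also have "\<dots> \<le> (\<Sum>t\<in>T. (d t)\<^sup>2) * (\<Sum>t\<in>T. (A * c t + B * s t)\<^sup>2)"
    by (rule Cauchy_Schwarz_ineq_sum)
  also have "\<dots> \<le> (\<Sum>t\<in>T. (d t)\<^sup>2) * (N * (A\<^sup>2 + B\<^sup>2))"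
    by (intro mult_left_mono synthesis sum_nonneg) simp
  finally have "(A\<^sup>2 + B\<^sup>2) * (A\<^sup>2 + B\<^sup>2) \<le> (N * (\<Sum>t\<in>T. (d t)\<^sup>2)) * (A\<^sup>2 + B\<^sup>2)"
    by (simp add: power2_eq_square mult_ac)
  moreover have "0 \<le> N * (\<Sum>t\<in>T. (d t)\<^sup>2)"
    using \<open>N \<ge> 0\<close> by (simp add: sum_nonneg)
  moreover have "0 \<le> A\<^sup>2 + B\<^sup>2"
    by simp
  ultimately show ?thesis
    unfolding A_def[symmetric] B_def[symmetric]
    by (cases "A\<^sup>2 + B\<^sup>2 = 0") (auto simp: mult_le_cancel_right)
qed

lemma cmod_dft_sq:
  "(cmod (dft n d f))\<^sup>2 =
     ((\<Sum>t<n. d t * cos (2 * pi * real t * real f / real n))\<^sup>2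
      + (\<Sum>t<n. d t * sin (2 * pi * real t * real f / real n))\<^sup>2) / real n"
proof -
  have "dft n d f = complex_of_real (1 / sqrt (real n)) *
          (\<Sum>t<n. complex_of_real (d t) * cis (- (2 * pi * real t * real f / real n)))"
    by (simp add: dft_def cis_conv_exp)
  then have "Re (dft n d f) = (\<Sum>t<n. d t * cos (2 * pi * real t * real f / real n)) / sqrt (real n)"
    and "Im (dft n d f) = - (\<Sum>t<n. d t * sin (2 * pi * real t * real f / real n)) / sqrt (real n)"
    by (simp_all add: sum_negf)
  then show ?thesis
    by (simp add: cmod_power2 power_divide add_divide_distrib)
qed

lemma cmod_dft_sq_le: "(cmod (dft n d f))\<^sup>2 \<le> (\<Sum>t<n. (d t)\<^sup>2)"
proof -
  have "(\<Sum>t<n. d t * cos (2 * pi * real t * real f / real n))\<^sup>2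
        + (\<Sum>t<n. d t * sin (2 * pi * real t * real f / real n))\<^sup>2 \<le> real n * (\<Sum>t<n. (d t)\<^sup>2)"
  proof (rule analysis_bound_of_synthesis_bound)
    fix \<alpha> \<beta> :: real
    have "(\<Sum>t<n. (\<alpha> * cos (2 * pi * real t * real f / real n)
                  + \<beta> * sin (2 * pi * real t * real f / real n))\<^sup>2) \<le> (\<Sum>t<n. \<alpha>\<^sup>2 + \<beta>\<^sup>2)"
      by (intro sum_mono sq_cos_sin_comb_le)
    then show "(\<Sum>t<n. (\<alpha> * cos (2 * pi * real t * real f / real n)
                  + \<beta> * sin (2 * pi * real t * real f / real n))\<^sup>2) \<le> real n * (\<alpha>\<^sup>2 + \<beta>\<^sup>2)"
      by simp
  qed
  then show ?thesis
    by (cases "n = 0") (simp_all add: cmod_dft_sq field_simps)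
qed

lemma cmod_dft_sq_le_half:
  assumes "\<not> n dvd 2 * f"
  shows "(cmod (dft n d f))\<^sup>2 \<le> (\<Sum>t<n. (d t)\<^sup>2) / 2"
proof -
  have "(\<Sum>t<n. d t * cos (2 * pi * real t * real f / real n))\<^sup>2
        + (\<Sum>t<n. d t * sin (2 * pi * real t * real f / real n))\<^sup>2 \<le> real n / 2 * (\<Sum>t<n. (d t)\<^sup>2)"
    by (rule analysis_bound_of_synthesis_bound) (simp add: sum_sq_cos_sin_comb_dft_angles[OF assms])
  then show ?thesis
    by (cases "n = 0") (simp_all add: cmod_dft_sq field_simps)
qed

lemma dft_diff: "dft n x f - dft n q f = dft n (\<lambda>t. x t - q t) f"
  by (simp add: dft_def left_diff_distrib right_diff_distrib sum_subtractf)

lemma cmod_dft_diff_le_eucl_dist: "cmod (dft n x f - dft n q f) \<le> eucl_dist n x q"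
  unfolding dft_diff eucl_dist_def by (rule real_le_rsqrt) (simp add: cmod_dft_sq_le)

lemma cmod_dft_diff_le_eucl_dist_half:
  assumes "\<not> n dvd 2 * f"
  shows "cmod (dft n x f - dft n q f) \<le> eucl_dist n x q / sqrt 2"
  unfolding dft_diff eucl_dist_def real_sqrt_divide[symmetric]
  by (rule real_le_rsqrt) (use cmod_dft_sq_le_half[OF assms, of "\<lambda>t. x t - q t"] in simp)

theorem mainTheorem1:
  fixes n k :: nat and x q :: "nat \<Rightarrow> real" and \<epsilon> :: real
  assumes "n \<ge> 3"
    and "\<epsilon> > 0"
    and "1 \<le> k" and "real k < real n / 2"
    and "eucl_dist n x q < \<epsilon>"
  shows "cmod (dft n x 0 - dft n q 0) < \<epsilon>
       \<and> (\<forall>f\<in>{1..k}. cmod (dft n x f - dft n q f) < \<epsilon> / sqrt 2)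
       \<and> \<bar>Re (dft n x 0) - Re (dft n q 0)\<bar> < \<epsilon>
       \<and> (\<forall>f\<in>{1..k}. \<bar>Re (dft n x f) - Re (dft n q f)\<bar> < \<epsilon> / sqrt 2
                     \<and> \<bar>Im (dft n x f) - Im (dft n q f)\<bar> < \<epsilon> / sqrt 2)"
proof -
  have coeff0: "cmod (dft n x 0 - dft n q 0) < \<epsilon>"
    using cmod_dft_diff_le_eucl_dist assms(5) by (rule le_less_trans)
  have coeff: "cmod (dft n x f - dft n q f) < \<epsilon> / sqrt 2" if "f \<in> {1..k}" for f
  proof -
    have "0 < 2 * f" "2 * f < n"
      using that assms(4) by auto
    then have "\<not> n dvd 2 * f"
      by (auto dest: dvd_imp_le)
    then have "cmod (dft n x f - dft n q f) \<le> eucl_dist n x q / sqrt 2"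
      by (rule cmod_dft_diff_le_eucl_dist_half)
    also have "\<dots> < \<epsilon> / sqrt 2"
      using assms(5) by (simp add: divide_strict_right_mono)
    finally show ?thesis .
  qed
  have "\<bar>Re a - Re b\<bar> \<le> cmod (a - b)" "\<bar>Im a - Im b\<bar> \<le> cmod (a - b)" for a b
    using abs_Re_le_cmod[of "a - b"] abs_Im_le_cmod[of "a - b"] by simp_all
  with coeff0 coeff show ?thesis
    by (meson le_less_trans)
qed

end
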